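(* Let $U\subset\mathbb R$ be a closed interval, $f^l,f^r\in C(U;\mathbb R)$, $\mathcal G$ an L1D germ, and $(u^l,u^r)\in\mathcal G$. Let $u_-\in U$ connect to $u^l$ from the left and let $u^r$ connect to $u_+\in U$ from the right. If $(u_-,u_+)\in\overline{\mathcal G}$, then $f^l(u_-)=f^r(u_+)=f^l(u^l)=f^r(u^r)$.
   Context: $q^{l,r}(z,k)=\operatorname{sign}(z-k)(f^{l,r}(z)-f^{l,r}(k))$. A germ is a set $\mathcal G\subset U\times U$ of pairs with $f^l(u^l)=f^r(u^r)$; L1D if $q^l(u^l,\hat u^l)\ge q^r(u^r,\hat u^r)$ for all pairs in $\mathcal G$. $u_-$ connects to $u^l$ from the left if there is a Kruzhkov entropy solution $w$ of $w_t+f^l(w)_x=0$ on $(0,\infty)\times\mathbb R$ with data $u_-$ ($x<0$), $u^l$ ($x>0$) and $w=u^l$ a.e. on $\{x>0\}$ (only waves of nonpositive speed); $u^r$ connects to $u_+$ from the right if there is a Kruzhkov entropy solution $w$ of $w_t+f^r(w)_x=0$ with data $u^r$ ($x<0$), $u_+$ ($x>0$) and $w=u^r$ a.e. on $\{x<0\}$. Left contact shock: $(a,b)$ such that $a\mathbf 1_{x<0}+b\mathbf 1_{x>0}$ is a Kruzhkov entropy solution of $u_t+f^l(u)_x=0$; right contact shock: same with $f^r$. A germ is closed if it is a closed subset of $U\times U$ and contains $(a,d)$ whenever it contains $(b,c)$ with $(a,b)$ a left and $(c,d)$ a right contact shock; $\overline{\mathcal G}$ is the smallest closed germ containing $\mathcal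 G$. *)

theory Defs
  imports "HOL-Analysis.Analysis"
begin

definition kflux :: "(real \<Rightarrow> real) \<Rightarrow> real \<Rightarrow> real \<Rightarrow> real" where
  "kflux f z k = sgn (z - k) * (f z - f k)"

definition test_fun ::
  "(real \<times> real \<Rightarrow> real) \<Rightarrow> (real \<times> real \<Rightarrow> real) \<Rightarrow> (real \<times> real \<Rightarrow> real) \<Rightarrow> bool" where
  "test_fun phi phit phix \<longleftrightarrow>
     (\<forall>z. phi z \<ge> 0) \<and>
     (\<exists>R. \<forall>z. norm z > R \<longrightarrow> phi z = 0) \<and>
     continuous_on UNIV phit \<and> continuous_on UNIV phix \<and>
     (\<forall>z. (phi has_derivative (\<lambda>h. phit z * fst h + phix z * snd h)) (at z))"

text \<open>Kruzhkov entropy solution of  w_t + f(w)_x = 0  on (0,\<infinity>) \<times> R with initial data u0,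
  U-valued and bounded; entropy inequalities for all k in U with initial data built in.\<close>
definition kruzhkov_sol ::
  "(real \<Rightarrow> real) \<Rightarrow> real set \<Rightarrow> (real \<Rightarrow> real \<Rightarrow> real) \<Rightarrow> (real \<Rightarrow> real) \<Rightarrow> bool" where
  "kruzhkov_sol f U w u0 \<longleftrightarrow>
     (\<lambda>z. w (fst z) (snd z)) \<in> borel_measurable lborel \<and>
     (\<forall>t x. w t x \<in> U) \<and> (\<exists>M. \<forall>t x. \<bar>w t x\<bar> \<le> M) \<and>
     (\<forall>k\<in>U. \<forall>phi phit phix. test_fun phi phit phix \<longrightarrow>
        (\<integral>z. indicator {z. fst z > 0} z *
             (\<bar>w (fst z) (snd z) - k\<bar> * phit z + kflux f (w (fst z) (snd z)) k * phix z) \<partial>lborel)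
        + (\<integral>x. \<bar>u0 x - k\<bar> * phi (0, x) \<partial>lborel) \<ge> 0)"

definition step :: "real \<Rightarrow> real \<Rightarrow> real \<Rightarrow> real" where
  "step a b x = (if x < 0 then a else b)"

definition connects_left :: "(real \<Rightarrow> real) \<Rightarrow> real set \<Rightarrow> real \<Rightarrow> real \<Rightarrow> bool" where
  "connects_left fl U um ul \<longleftrightarrow>
     (\<exists>w. kruzhkov_sol fl U w (step um ul) \<and>
          (AE z in lborel. fst z > 0 \<and> snd z > 0 \<longrightarrow> w (fst z) (snd z) = ul))"

definition connects_right :: "(real \<Rightarrow> real) \<Rightarrow> real set \<Rightarrow> real \<Rightarrow> real \<Rightarrow> bool" where
  "connects_right fr U ur up \<longleftrightarrow>
     (\<exists>w. kruzhkov_sol fr U w (step ur up) \<and>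
          (AE z in lborel. fst z > 0 \<and> snd z < 0 \<longrightarrow> w (fst z) (snd z) = ur))"

definition contact_shock :: "(real \<Rightarrow> real) \<Rightarrow> real set \<Rightarrow> real \<Rightarrow> real \<Rightarrow> bool" where
  "contact_shock f U a b \<longleftrightarrow> a \<in> U \<and> b \<in> U \<and>
     kruzhkov_sol f U (\<lambda>t x. step a b x) (step a b)"

definition germ :: "(real \<Rightarrow> real) \<Rightarrow> (real \<Rightarrow> real) \<Rightarrow> real set \<Rightarrow> (real \<times> real) set \<Rightarrow> bool" where
  "germ fl fr U G \<longleftrightarrow> G \<subseteq> U \<times> U \<and> (\<forall>(a,b)\<in>G. fl a = fr b)"

definition L1D :: "(real \<Rightarrow> real) \<Rightarrow> (real \<Rightarrow> real) \<Rightarrow> real set \<Rightarrow> (real \<times> real) set \<Rightarrow> bool" where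
  "L1D fl fr U G \<longleftrightarrow> germ fl fr U G \<and>
     (\<forall>(ul,ur)\<in>G. \<forall>(vl,vr)\<in>G. kflux fl ul vl \<ge> kflux fr ur vr)"

definition closed_germ :: "(real \<Rightarrow> real) \<Rightarrow> (real \<Rightarrow> real) \<Rightarrow> real set \<Rightarrow> (real \<times> real) set \<Rightarrow> bool" where
  "closed_germ fl fr U G \<longleftrightarrow> germ fl fr U G \<and> closedin (top_of_set (U \<times> U)) G \<and>
     (\<forall>a b c d. (b,c) \<in> G \<and> contact_shock fl U a b \<and> contact_shock fr U c d \<longrightarrow> (a,d) \<in> G)"

definition germ_closure :: "(real \<Rightarrow> real) \<Rightarrow> (real \<Rightarrow> real) \<Rightarrow> real set \<Rightarrow> (real \<times> real) set \<Rightarrow> (real \<times> real) set" where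
  "germ_closure fl fr U G = \<Inter>{H. closed_germ fl fr U H \<and> G \<subseteq> H}"

end

theory Submission
  imports Defs
begin

(*
  Every pair in the germ closure satisfies the dissipation inequalities that the L1D property
  imposes on the pairs of G: the set of (a, b) with fl a = fr b and qr(b, y) \<le> ql(a, x) for all
  (x, y) \<in> G contains G, is closed by continuity, and is stable under adding contact shocks,
  because a contact shock (a, b) satisfies q(b, k) \<le> q(a, k) for every k.  Hence
  qr(u+, ur) \<le> ql(u-, ul).

  On the other hand, if a solution with Riemann data u- | ul equals ul on x > 0, then
  ql(u-, ul) \<le> 0.  Test the entropy inequality with k = u- against \<chi>(t) \<psi>(x), where \<psi> = 1 on
  [-R, 0], rises on [-2R, -R] and falls to 0 on [0, e].  The right edge yields -ql(ul, u-) times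
  the time integral of \<chi>, the initial data contribute O(e), and at the left edge the flux is
  \<delta> + O(|w - u-|), where the \<chi>'-weighted mass of |w - u-| under the plateau is bounded
  independently of R by the same entropy inequality; so the left edge costs only \<delta> + O(1/R).
  Symmetrically qr(u+, ur) \<ge> 0, so ql(u-, ul) = 0 and fl u- = fl ul.
*)

lemma kflux_commute: "kflux f a b = kflux f b a"
  unfolding kflux_def by (simp add: sgn_real_def)

lemma kflux_self [simp]: "kflux f a a = 0"
  unfolding kflux_def by simp

lemma abs_kflux_le: "\<bar>kflux f a b\<bar> \<le> \<bar>f a - f b\<bar>"
  unfolding kflux_def by (simp add: abs_mult sgn_real_def)

lemma kflux_eq_0_imp_eq: "kflux f a b = 0 \<Longrightarrow> f a = f b"
  unfolding kflux_def by (cases "a = b") (auto simp: sgn_real_def split: if_splits)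

lemma continuous_on_kflux:
  fixes f :: "real \<Rightarrow> real"
  assumes "continuous_on U f"
  shows "continuous_on U (\<lambda>z. kflux f z k)"
proof -
  have eq: "(\<lambda>z. kflux f z k) = (\<lambda>z. if z - k \<le> 0 then f k - f z else f z - f k)"
    by (auto simp: fun_eq_iff kflux_def sgn_real_def)
  show ?thesis unfolding eq
    by (rule continuous_on_cases_le)
      (auto intro!: continuous_intros intro: continuous_on_subset[OF assms])
qed

lemma continuous_on_closed_bounded:
  fixes f :: "real \<Rightarrow> real"
  assumes "closed U" "continuous_on U f"
  obtains B where "\<And>v. v \<in> U \<Longrightarrow> \<bar>v\<bar> \<le> M \<Longrightarrow> \<bar>f v\<bar> \<le> B"
proof -
  have "compact (U \<inter> {-M..M})" using assms by (intro closed_Int_compact) auto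
  then have "compact (f ` (U \<inter> {-M..M}))"
    by (rule compact_continuous_image[OF continuous_on_subset[OF assms(2)], rotated]) auto
  then obtain B where "\<forall>y\<in>f ` (U \<inter> {-M..M}). norm y \<le> B"
    using compact_imp_bounded bounded_iff by metis
  then show thesis by (intro that[of B]) (auto simp: abs_le_iff)
qed

lemma kflux_modulus:
  fixes f :: "real \<Rightarrow> real"
  assumes U: "closed U" and fc: "continuous_on U f" and k: "k \<in> U" and \<delta>: "0 < \<delta>"
  obtains C where "0 \<le> C" "\<And>v. v \<in> U \<Longrightarrow> \<bar>v\<bar> \<le> M \<Longrightarrow> \<bar>kflux f v k\<bar> \<le> \<delta> + C * \<bar>v - k\<bar>"
proof -
  obtain B where B: "\<And>v. v \<in> U \<Longrightarrow> \<bar>v\<bar> \<le> max M \<bar>k\<bar> \<Longrightarrow> \<bar>f v\<bar> \<le> B"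
    using continuous_on_closed_bounded[OF U fc] by blast
  obtain \<eta> where \<eta>: "0 < \<eta>" "\<And>y. y \<in> U \<Longrightarrow> \<bar>y - k\<bar> < \<eta> \<Longrightarrow> \<bar>f y - f k\<bar> < \<delta>"
    using fc k \<delta> unfolding continuous_on_iff dist_real_def by metis
  have fk: "\<bar>f k\<bar> \<le> B" using B[OF k] by simp
  show thesis
  proof (rule that[of "2 * B / \<eta>"])
    show "0 \<le> 2 * B / \<eta>" using order_trans[OF abs_ge_zero fk] \<eta> by simp
    fix v
    assume v: "v \<in> U" "\<bar>v\<bar> \<le> M"
    show "\<bar>kflux f v k\<bar> \<le> \<delta> + 2 * B / \<eta> * \<bar>v - k\<bar>"
    proof (cases "\<bar>v - k\<bar> < \<eta>")
      case True
      have "0 \<le> 2 * B / \<eta> * \<bar>v - k\<bar>" using order_trans[OF abs_ge_zero fk] \<eta> by simp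
      then show ?thesis using abs_kflux_le[of f v k] \<eta>(2)[OF v(1) True] by linarith
    next
      case False
      have "2 * B = 2 * B / \<eta> * \<eta>" using \<eta> by simp
      also have "\<dots> \<le> 2 * B / \<eta> * \<bar>v - k\<bar>"
        using False \<eta> order_trans[OF abs_ge_zero fk] by (intro mult_left_mono) auto
      finally show ?thesis
        using abs_kflux_le[of f v k] B[OF v(1)] fk v(2) \<delta> by fastforce
    qed
  qed
qed

lemma borel_measurable_continuous_on_closed_comp:
  fixes f :: "real \<Rightarrow> real"
  assumes "closed U" "continuous_on U f" "W \<in> borel_measurable M" "\<And>z. W z \<in> U"
  shows "(\<lambda>z. f (W z)) \<in> borel_measurable M"
proof -
  have "(\<lambda>x. if x \<in> U then f x else 0) \<in> borel_measurable borel"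
    using assms by (intro borel_measurable_continuous_on_if) auto
  from measurable_compose[OF assms(3) this] show ?thesis
    using assms(4) by simp
qed

lemma integrable_bounded_indicator_Icc:
  fixes g :: "real \<Rightarrow> real"
  assumes "g \<in> borel_measurable lborel" "\<And>x. \<bar>g x\<bar> \<le> C * indicator {a..b} x"
  shows "integrable lborel g"
proof (rule Bochner_Integration.integrable_bound)
  show "integrable lborel (\<lambda>x. C * indicator {a..b} x :: real)"
    by (intro integrable_mult_right integrable_real_indicator) (auto simp: emeasure_lborel_Icc_eq)
qed (use assms in \<open>auto intro!: AE_I2 intro: order_trans[OF _ abs_ge_self]\<close>)

lemma lborel_integral_unit_scale:
  fixes h :: "real \<Rightarrow> real"
  assumes s: "\<bar>s\<bar> = 1"
  shows "integrable lborel (\<lambda>x. h (s * x)) \<longleftrightarrow> integrable lborel h"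
    "(\<integral>x. h (s * x) \<partial>lborel) = (\<integral>x. h x \<partial>lborel)"
proof -
  have s0: "s \<noteq> 0" using s by auto
  show "integrable lborel (\<lambda>x. h (s * x)) \<longleftrightarrow> integrable lborel h"
    using lborel_integrable_real_affine_iff[OF s0, of h 0] by simp
  show "(\<integral>x. h (s * x) \<partial>lborel) = (\<integral>x. h x \<partial>lborel)"
    using lborel_integral_real_affine[OF s0, of h 0] s by simp
qed

lemma lborel_integral_indicator_unit_scale:
  assumes s: "\<bar>s\<bar> = 1" and ab: "a \<le> b"
  shows "integrable lborel (\<lambda>x. indicator {a..b} (s * x) :: real)"
    "(\<integral>x. indicator {a..b} (s * x) \<partial>lborel) = (b - a :: real)"
  using lborel_integral_unit_scale[OF s, of "indicator {a..b}"] ab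
  by (auto intro: integrable_real_indicator simp: emeasure_lborel_Icc_eq)

lemma lborel_pair_integral_mult:
  fixes g h :: "real \<Rightarrow> real"
  assumes g: "integrable lborel g" and h: "integrable lborel h"
  shows "integrable lborel (\<lambda>z::real\<times>real. g (fst z) * h (snd z))"
    "(\<integral>z. g (fst z) * h (snd z) \<partial>lborel) = (\<integral>t. g t \<partial>lborel) * (\<integral>x. h x \<partial>lborel)"
proof -
  have [measurable]: "g \<in> borel_measurable lborel" "h \<in> borel_measurable lborel"
    using g h by (auto intro: borel_measurable_integrable)
  have I: "integrable (lborel \<Otimes>\<^sub>M lborel) (\<lambda>z::real\<times>real. g (fst z) * h (snd z))"
  proof (rule lborel_pair.Fubini_integrable)
    have "integrable lborel (\<lambda>x. \<bar>g x\<bar> * (\<integral>y. \<bar>h y\<bar> \<partial>lborel))"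
      using g by (intro integrable_mult_left) auto
    then show "integrable lborel (\<lambda>x. \<integral>y. norm (g (fst (x, y)) * h (snd (x, y))) \<partial>lborel)"
      by (simp add: abs_mult)
    show "AE x in lborel. integrable lborel (\<lambda>y. g (fst (x, y)) * h (snd (x, y)))"
      using h by (auto intro!: integrable_mult_right)
  qed measurable
  then show "integrable lborel (\<lambda>z::real\<times>real. g (fst z) * h (snd z))"
    by (simp add: lborel_prod)
  from lborel_pair.integral_fst'[OF I]
  show "(\<integral>z. g (fst z) * h (snd z) \<partial>lborel) = (\<integral>t. g t \<partial>lborel) * (\<integral>x. h x \<partial>lborel)"
    by (simp add: lborel_prod)
qed

lemma integrable_bounded_indicator_box:
  fixes g :: "real \<times> real \<Rightarrow> real"
  assumes "g \<in> borel_measurable lborel"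
    and "\<And>z. \<bar>g z\<bar> \<le> C * (indicator {a1..b1} (fst z) * indicator {a2..b2} (snd z))"
  shows "integrable lborel g"
proof (rule Bochner_Integration.integrable_bound)
  have "integrable lborel (indicator {a..b} :: real \<Rightarrow> real)" for a b
    by (intro integrable_real_indicator) (auto simp: emeasure_lborel_Icc_eq)
  then show "integrable lborel (\<lambda>z::real\<times>real. C * (indicator {a1..b1} (fst z) * indicator {a2..b2} (snd z)))"
    by (intro integrable_mult_right lborel_pair_integral_mult)
qed (use assms in \<open>auto intro!: AE_I2 intro: order_trans[OF _ abs_ge_self]\<close>)

lemma indicator_pos_fst: "indicator {z::real\<times>real. fst z > 0} z = (indicator {0<..} (fst z) :: real)"
  by (simp add: indicator_def)

lemma step_measurable [measurable]: "step a b \<in> borel_measurable borel"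
  unfolding step_def[abs_def] by measurable

section \<open>Compactly supported \<open>C\<^sup>1\<close> cutoff functions\<close>

definition c1_bump :: "(real \<Rightarrow> real) \<Rightarrow> (real \<Rightarrow> real) \<Rightarrow> real \<Rightarrow> real \<Rightarrow> bool" where
  "c1_bump c c' A C \<longleftrightarrow>
     (\<forall>t. (c has_real_derivative c' t) (at t)) \<and> continuous_on UNIV c' \<and>
     (\<forall>t. 0 \<le> c t \<and> c t \<le> C * indicator {-A..A} t \<and> \<bar>c' t\<bar> \<le> C * indicator {-A..A} t)"

lemma c1_bumpD:
  assumes "c1_bump c c' A C"
  shows "(c has_real_derivative c' t) (at t)" "continuous_on UNIV c'" "continuous_on UNIV c"
    "0 \<le> c t" "c t \<le> C * indicator {-A..A} t" "\<bar>c' t\<bar> \<le> C * indicator {-A..A} t"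
    "A < \<bar>t\<bar> \<Longrightarrow> c t = 0" "A < \<bar>t\<bar> \<Longrightarrow> c' t = 0"
proof -
  have *: "0 \<le> c t" "c t \<le> C * indicator {-A..A} t" "\<bar>c' t\<bar> \<le> C * indicator {-A..A} t"
    and d: "\<And>t. (c has_real_derivative c' t) (at t)"
    using assms unfolding c1_bump_def by auto
  show "(c has_real_derivative c' t) (at t)" "0 \<le> c t" "c t \<le> C * indicator {-A..A} t"
    "\<bar>c' t\<bar> \<le> C * indicator {-A..A} t" by (fact d *)+
  show "continuous_on UNIV c'" using assms unfolding c1_bump_def by simp
  show "continuous_on UNIV c"
    using d by (intro continuous_at_imp_continuous_on ballI DERIV_isCont)
  show "A < \<bar>t\<bar> \<Longrightarrow> c t = 0" "A < \<bar>t\<bar> \<Longrightarrow> c' t = 0"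
  proof -
    assume "A < \<bar>t\<bar>"
    then have "\<not> (- A \<le> t \<and> t \<le> A)" by arith
    then have "indicator {-A..A} t = (0::real)" by (simp add: indicator_def)
    then show "c t = 0" "c' t = 0" using * by simp_all
  qed
qed

lemma c1_bump_measurable:
  assumes "c1_bump c c' A C"
  shows "c \<in> borel_measurable borel" "c' \<in> borel_measurable borel"
  using c1_bumpD(2,3)[OF assms] by (auto intro: borel_measurable_continuous_onI)

lemma c1_bump_reflect:
  assumes s: "\<bar>s\<bar> = 1" and c: "c1_bump c c' A C"
  shows "c1_bump (\<lambda>x. c (s * x)) (\<lambda>x. s * c' (s * x)) A C"
proof -
  have ind: "indicator {-A..A} (s * x) = (indicator {-A..A} x :: real)" for x
  proof -
    have "s * x \<in> {-A..A} \<longleftrightarrow> \<bar>s * x\<bar> \<le> A" "x \<in> {-A..A} \<longleftrightarrow> \<bar>x\<bar> \<le> A"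
      by auto
    then show ?thesis using s by (simp add: indicator_def abs_mult)
  qed
  have "((\<lambda>x. c (s * x)) has_real_derivative s * c' (s * x)) (at x)" for x
    using DERIV_chain2[OF c1_bumpD(1)[OF c] DERIV_cmult_Id[of s x]] by (simp add: mult.commute)
  moreover have "continuous_on UNIV (\<lambda>x. s * c' (s * x))"
    by (intro continuous_intros continuous_on_compose2[OF c1_bumpD(2)[OF c]]) auto
  moreover have "0 \<le> c (s * x)" "c (s * x) \<le> C * indicator {-A..A} x"
    "\<bar>s * c' (s * x)\<bar> \<le> C * indicator {-A..A} x" for x
    using c1_bumpD(4-6)[OF c, of "s * x"] s unfolding ind by (simp_all add: abs_mult)
  ultimately show ?thesis unfolding c1_bump_def by blast
qed

lemma c1_bump_integral_deriv_half_lines: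
  assumes c: "c1_bump c c' A C"
  shows "integrable lborel (\<lambda>t. indicator {0<..} t * c' t)"
    "(\<integral>t. indicator {0<..} t * c' t \<partial>lborel) = - c 0"
    "integrable lborel (\<lambda>t. indicator {..<0} t * c' t)"
    "(\<integral>t. indicator {..<0} t * c' t \<partial>lborel) = c 0"
proof -
  note [measurable] = c1_bump_measurable[OF c]
  define b where "b = \<bar>A\<bar> + 1"
  have b: "0 \<le> b" "c b = 0" "c (- b) = 0" "\<And>t. b < \<bar>t\<bar> \<Longrightarrow> c' t = 0"
    using c1_bumpD(7,8)[OF c] by (auto simp: b_def)
  have FTC: "(\<integral>t. indicator {u..v} t *\<^sub>R c' t \<partial>lborel) = c v - c u" if "u \<le> v" for u v
    using that c1_bumpD(1,2)[OF c]
    by (intro integral_FTC_atLeastAtMost)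
      (auto simp: has_real_derivative_iff_has_vector_derivative[symmetric]
        intro: has_field_derivative_at_within continuous_on_subset)
  have bound: "\<bar>indicator S t * c' t\<bar> \<le> C * indicator {-A..A} t" for S t
    using c1_bumpD(6)[OF c, of t] by (auto simp: indicator_def)
  show "integrable lborel (\<lambda>t. indicator {0<..} t * c' t)"
    "integrable lborel (\<lambda>t. indicator {..<0} t * c' t)"
    by (rule integrable_bounded_indicator_Icc[OF _ bound], measurable)+
  have "(\<integral>t. indicator {0<..} t * c' t \<partial>lborel) = (\<integral>t. indicator {0..b} t *\<^sub>R c' t \<partial>lborel)"
    by (intro integral_cong_AE AE_mp[OF AE_lborel_singleton[of 0] AE_I2])
      (use b(4) in \<open>auto simp: indicator_def\<close>)
  then show "(\<integral>t. indicator {0<..} t * c' t \<partial>lborel) = - c 0"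
    using FTC[of 0 b] b by simp
  have "(\<integral>t. indicator {..<0} t * c' t \<partial>lborel) = (\<integral>t. indicator {-b..0} t *\<^sub>R c' t \<partial>lborel)"
    by (intro integral_cong_AE AE_mp[OF AE_lborel_singleton[of 0] AE_I2])
      (use b(4) in \<open>auto simp: indicator_def\<close>)
  then show "(\<integral>t. indicator {..<0} t * c' t \<partial>lborel) = c 0"
    using FTC[of "-b" 0] b by simp
qed

definition pos_sq :: "real \<Rightarrow> real" where
  "pos_sq u = (max 0 u)\<^sup>2"

lemma DERIV_pos_sq: "(pos_sq has_real_derivative 2 * max 0 u) (at u)"
proof -
  have pos_sq_eq: "pos_sq = (\<lambda>u. (u\<^sup>2 + u * \<bar>u\<bar>) / 2)"
    by (auto simp: pos_sq_def fun_eq_iff max_def power2_eq_square abs_if)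
  consider "u = 0" | "0 < u" | "u < 0" by linarith
  then have "((\<lambda>u. (u\<^sup>2 + u * \<bar>u\<bar>) / 2) has_real_derivative 2 * max 0 u) (at u)"
  proof cases
    case 1
    have "((\<lambda>h::real. (h + \<bar>h\<bar>) / 2) \<longlongrightarrow> (0 + \<bar>0\<bar>) / 2) (at 0)"
      by (intro tendsto_intros) auto
    then have "((\<lambda>h::real. (h + \<bar>h\<bar>) / 2) \<longlongrightarrow> 0) (at 0)" by simp
    moreover have "\<forall>\<^sub>F h in at (0::real). (h + \<bar>h\<bar>) / 2 = ((h\<^sup>2 + h * \<bar>h\<bar>) / 2 - 0) / h"
      by (auto simp: eventually_at_filter power2_eq_square field_simps)
    ultimately show ?thesis
      using 1 by (simp add: DERIV_def Lim_transform_eventually)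
  next
    case 2
    have "((\<lambda>u. (u\<^sup>2 + u * u) / 2) has_real_derivative 2 * max 0 u) (at u)"
      using 2 by (auto intro!: derivative_eq_intros)
    then show ?thesis
      by (rule has_field_derivative_transform_within_open[where S="{0<..}"]) (use 2 in auto)
  next
    case 3
    have "((\<lambda>u. (u\<^sup>2 + u * (- u)) / 2) has_real_derivative 2 * max 0 u) (at u)"
      using 3 by (auto intro!: derivative_eq_intros)
    then show ?thesis
      by (rule has_field_derivative_transform_within_open[where S="{..<0}"]) (use 3 in auto)
  qed
  then show ?thesis unfolding pos_sq_eq .
qed

definition ramp :: "real \<Rightarrow> real" where
  "ramp y = 2 * (pos_sq y - 2 * pos_sq (y - 1/2) + pos_sq (y - 1))"

definition ramp' :: "real \<Rightarrow> real" where
  "ramp' y = 4 * (max 0 y - 2 * max 0 (y - 1/2) + max 0 (y - 1))"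

lemma DERIV_ramp: "(ramp has_real_derivative ramp' y) (at y)"
  unfolding ramp_def[abs_def] ramp'_def
  by (auto intro!: derivative_eq_intros DERIV_pos_sq[THEN DERIV_chain2] simp: algebra_simps)

lemma continuous_on_ramp: "continuous_on UNIV ramp"
  using DERIV_ramp by (intro continuous_at_imp_continuous_on ballI DERIV_isCont)

lemma continuous_on_ramp': "continuous_on UNIV ramp'"
  unfolding ramp'_def by (intro continuous_intros)

lemma ramp_eq_0: "y \<le> 0 \<Longrightarrow> ramp y = 0 \<and> ramp' y = 0"
  by (simp add: ramp_def ramp'_def pos_sq_def)

lemma ramp_eq_1: "1 \<le> y \<Longrightarrow> ramp y = 1 \<and> ramp' y = 0"
  by (simp add: ramp_def ramp'_def pos_sq_def max_def power2_eq_square algebra_simps)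

lemma ramp_first_half: "0 \<le> y \<Longrightarrow> y \<le> 1/2 \<Longrightarrow> ramp y = 2 * y\<^sup>2 \<and> ramp' y = 4 * y"
  by (simp add: ramp_def ramp'_def pos_sq_def max_def)

lemma ramp_second_half:
  "1/2 \<le> y \<Longrightarrow> y \<le> 1 \<Longrightarrow> ramp y = 1 - 2 * (1 - y)\<^sup>2 \<and> ramp' y = 4 * (1 - y)"
  by (simp add: ramp_def ramp'_def pos_sq_def max_def power2_eq_square algebra_simps)

lemma ramp_bounds: "0 \<le> ramp y" "ramp y \<le> 1" "0 \<le> ramp' y" "ramp' y \<le> 2"
proof -
  consider "y \<le> 0 \<or> 1 \<le> y" | "0 \<le> y" "y \<le> 1/2" | "1/2 \<le> y" "y \<le> 1" by linarith
  then have "0 \<le> ramp y \<and> ramp y \<le> 1 \<and> 0 \<le> ramp' y \<and> ramp' y \<le> 2"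
  proof cases
    case 1
    then show ?thesis using ramp_eq_0 ramp_eq_1 by auto
  next
    case 2
    moreover have "y * y \<le> 1/2 * (1/2)" using 2 by (intro mult_mono) auto
    ultimately show ?thesis using ramp_first_half by (simp add: power2_eq_square)
  next
    case 3
    moreover have "(1 - y) * (1 - y) \<le> 1/2 * (1/2)" using 3 by (intro mult_mono) auto
    ultimately show ?thesis using ramp_second_half by (simp add: power2_eq_square)
  qed
  then show "0 \<le> ramp y" "ramp y \<le> 1" "0 \<le> ramp' y" "ramp' y \<le> 2" by auto
qed

lemma ramp'_eq_0: "y \<le> 0 \<or> 1 \<le> y \<Longrightarrow> ramp' y = 0"
  using ramp_eq_0 ramp_eq_1 by auto

definition time_cutoff :: "real \<Rightarrow> real" where
  "time_cutoff t = pos_sq (1 - ((t + 1) / 3)\<^sup>2)"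

definition time_cutoff' :: "real \<Rightarrow> real" where
  "time_cutoff' t = - 4 / 3 * (max 0 (1 - ((t + 1) / 3)\<^sup>2) * ((t + 1) / 3))"

lemma time_cutoff_vanish: "2 \<le> t \<or> t < - 4 \<Longrightarrow> time_cutoff t = 0 \<and> time_cutoff' t = 0"
proof -
  assume "2 \<le> t \<or> t < - 4"
  then have "1 \<le> \<bar>(t + 1) / 3\<bar>" by auto
  then have "1 * 1 \<le> \<bar>(t + 1) / 3\<bar> * \<bar>(t + 1) / 3\<bar>" by (intro mult_mono) auto
  then have "1 \<le> ((t + 1) / 3)\<^sup>2" by (simp add: power2_eq_square)
  then show ?thesis by (simp add: time_cutoff_def time_cutoff'_def pos_sq_def)
qed

lemma c1_bump_time_cutoff: "c1_bump time_cutoff time_cutoff' 4 2"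
proof -
  have "((\<lambda>t. pos_sq (1 - ((t + 1) / 3)\<^sup>2)) has_real_derivative time_cutoff' t) (at t)" for t
    by (rule DERIV_chain2[OF DERIV_pos_sq, THEN DERIV_cong])
      (auto intro!: derivative_eq_intros simp: time_cutoff'_def)
  moreover have "continuous_on UNIV time_cutoff'"
    unfolding time_cutoff'_def by (intro continuous_intros) auto
  moreover have "time_cutoff t \<le> 2 * indicator {-4..4} t" "\<bar>time_cutoff' t\<bar> \<le> 2 * indicator {-4..4} t" for t
  proof -
    define m where "m = max 0 (1 - ((t + 1) / 3)\<^sup>2)"
    have m: "0 \<le> m" "m \<le> 1" unfolding m_def by auto
    have "m * \<bar>(t + 1) / 3\<bar> \<le> 1 * 1"
    proof (cases "((t + 1) / 3)\<^sup>2 \<le> 1")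
      case True
      then have "\<bar>(t + 1) / 3\<bar> \<le> 1" using abs_le_square_iff[of "(t + 1) / 3" 1] by simp
      then show ?thesis using m by (intro mult_mono) auto
    qed (simp add: m_def)
    then have "time_cutoff t \<le> 2" "\<bar>time_cutoff' t\<bar> \<le> 2"
      using m power_mono[OF m(2) m(1), of 2]
      by (simp_all add: time_cutoff_def time_cutoff'_def pos_sq_def m_def[symmetric] abs_mult)
    then show "time_cutoff t \<le> 2 * indicator {-4..4} t" "\<bar>time_cutoff' t\<bar> \<le> 2 * indicator {-4..4} t"
      using time_cutoff_vanish[of t] by (auto simp: indicator_def)
  qed
  ultimately show ?thesis
    unfolding c1_bump_def by (auto simp: time_cutoff_def[abs_def] pos_sq_def)
qed

text \<open>On \<open>t \<ge> 0\<close> the cutoff is dominated by its own decay rate; this lets the zero-order term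
  produced by a spatial cutoff be absorbed into the time-derivative term.\<close>

lemma time_cutoff_le_deriv:
  assumes "0 \<le> t"
  shows "time_cutoff' t \<le> 0" "time_cutoff t \<le> 2 * (- time_cutoff' t)"
proof -
  define s where "s = (t + 1) / 3"
  have s: "1/3 \<le> s" using assms by (simp add: s_def)
  have ct: "time_cutoff t = (max 0 (1 - s\<^sup>2))\<^sup>2" "time_cutoff' t = - 4 / 3 * (max 0 (1 - s\<^sup>2) * s)"
    unfolding s_def by (simp_all add: time_cutoff_def time_cutoff'_def pos_sq_def)
  show "time_cutoff' t \<le> 0" using s unfolding ct by simp
  show "time_cutoff t \<le> 2 * (- time_cutoff' t)"
  proof (cases "s\<^sup>2 \<le> 1")
    case True
    have "s * s \<ge> 1/3 * (1/3)" using s by (intro mult_mono) auto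
    then have "1 - s\<^sup>2 \<le> 8 * s / 3" using s by (simp add: power2_eq_square)
    then have "(1 - s\<^sup>2) * (1 - s\<^sup>2) \<le> (8 * s / 3) * (1 - s\<^sup>2)"
      using True by (intro mult_right_mono) auto
    then show ?thesis using True unfolding ct by (simp add: power2_eq_square[of "1 - s\<^sup>2"] algebra_simps)
  qed (simp add: ct)
qed

definition time_mass :: real where
  "time_mass = (\<integral>t. indicator {0<..} t * time_cutoff t \<partial>lborel)"

lemma time_mass_pos:
  "integrable lborel (\<lambda>t. indicator {0<..} t * time_cutoff t)" "0 < time_mass"
  unfolding time_mass_def
proof -
  note c = c1_bump_time_cutoff
  note [measurable] = c1_bump_measurable[OF c]
  show I: "integrable lborel (\<lambda>t. indicator {0<..} t * time_cutoff t)"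
  proof (rule integrable_bounded_indicator_Icc)
    show "\<bar>indicator {0<..} t * time_cutoff t\<bar> \<le> 2 * indicator {-4..4} t" for t
      using c1_bumpD(4,5)[OF c, of t] by (cases "t \<in> {-4..4}") (auto simp: indicator_def)
  qed measurable
  have low: "25/81 \<le> time_cutoff t" if "0 \<le> t" "t \<le> 1" for t
  proof -
    have "((t + 1) / 3)\<^sup>2 \<le> (2/3)\<^sup>2" using that by (intro power_mono) auto
    then have "5/9 \<le> max 0 (1 - ((t + 1) / 3)\<^sup>2)" by (simp add: power2_eq_square)
    from power_mono[OF this, of 2] show ?thesis by (simp add: time_cutoff_def pos_sq_def power2_eq_square)
  qed
  have "(\<integral>t. 25/81 * indicator {0<..1::real} t \<partial>lborel) \<le> (\<integral>t. indicator {0<..} t * time_cutoff t \<partial>lborel)"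
    by (intro Bochner_Integration.integral_mono I integrable_mult_right integrable_real_indicator)
      (use low c1_bumpD(4)[OF c] in \<open>auto simp: indicator_def\<close>)
  then show "0 < (\<integral>t. indicator {0<..} t * time_cutoff t \<partial>lborel)" by simp
qed

definition plateau :: "real \<Rightarrow> real \<Rightarrow> real \<Rightarrow> real" where
  "plateau R e x = ramp ((x + 2 * R) / R) * ramp ((e - x) / e)"

definition plateau' :: "real \<Rightarrow> real \<Rightarrow> real \<Rightarrow> real" where
  "plateau' R e x = ramp' ((x + 2 * R) / R) / R * ramp ((e - x) / e)
     - ramp ((x + 2 * R) / R) * (ramp' ((e - x) / e) / e)"

lemma plateau_bounds: "0 \<le> plateau R e x" "plateau R e x \<le> 1"
  unfolding plateau_def using ramp_bounds by (auto intro: mult_le_one)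

context
  fixes R e :: real
  assumes R: "0 < R" and e: "0 < e"
begin

lemma DERIV_plateau: "(plateau R e has_real_derivative plateau' R e x) (at x)"
proof -
  have "((\<lambda>x. (x + 2 * R) / R) has_real_derivative 1 / R) (at x)"
    "((\<lambda>x. (e - x) / e) has_real_derivative - 1 / e) (at x)"
    using R e by (auto intro!: derivative_eq_intros)
  from DERIV_mult[OF DERIV_chain2[OF DERIV_ramp this(1)] DERIV_chain2[OF DERIV_ramp this(2)]] show ?thesis
    unfolding plateau_def[abs_def] by (rule DERIV_cong) (simp add: plateau'_def algebra_simps)
qed

lemma plateau_left:
  "x \<le> 0 \<Longrightarrow> plateau R e x = ramp ((x + 2 * R) / R) \<and> plateau' R e x = ramp' ((x + 2 * R) / R) / R"
  using ramp_eq_1[of "(e - x) / e"] e by (simp add: plateau_def plateau'_def field_simps)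

lemma plateau_right:
  "0 \<le> x \<Longrightarrow> plateau R e x = ramp ((e - x) / e) \<and> plateau' R e x = - ramp' ((e - x) / e) / e"
  using ramp_eq_1[of "(x + 2 * R) / R"] R by (simp add: plateau_def plateau'_def field_simps)

lemma plateau_eq_0: "x \<le> - 2 * R \<or> e \<le> x \<Longrightarrow> plateau R e x = 0"
  using plateau_left[of x] plateau_right[of x] ramp_eq_0[of "(x + 2 * R) / R"] ramp_eq_0[of "(e - x) / e"]
    R e by (auto simp: divide_nonpos_pos)

lemma plateau_eq_1: "- R \<le> x \<Longrightarrow> x \<le> 0 \<Longrightarrow> plateau R e x = 1"
  using plateau_left[of x] ramp_eq_1[of "(x + 2 * R) / R"] R by (simp add: field_simps)

lemma plateau'_left_bounds: "x \<le> 0 \<Longrightarrow> 0 \<le> plateau' R e x \<and> plateau' R e x \<le> 2 / R * indicator {-2*R..-R} x"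
proof -
  assume x: "x \<le> 0"
  have "ramp' ((x + 2 * R) / R) = 0" if "x \<notin> {-2*R..-R}"
    using that x R by (intro ramp'_eq_0) (auto simp: field_simps)
  then show ?thesis
    using plateau_left[OF x] ramp_bounds(3,4)[of "(x + 2 * R) / R"] R
    by (cases "x \<in> {-2*R..-R}") (auto simp: divide_right_mono)
qed

lemma plateau'_right_bounds: "0 \<le> x \<Longrightarrow> plateau' R e x \<le> 0 \<and> - plateau' R e x \<le> 2 / e * indicator {0..e} x"
proof -
  assume x: "0 \<le> x"
  have "ramp' ((e - x) / e) = 0" if "x \<notin> {0..e}"
    using that x e by (intro ramp'_eq_0) (auto simp: field_simps)
  then show ?thesis
    using plateau_right[OF x] ramp_bounds(3,4)[of "(e - x) / e"] e
    by (cases "x \<in> {0..e}") (auto simp: divide_right_mono)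
qed

lemma plateau'_0: "plateau' R e 0 = 0"
  using plateau_right[of 0] ramp_eq_1[of 1] by simp

lemma abs_plateau'_le: "\<bar>plateau' R e x\<bar> \<le> 2 / R * indicator {-2*R..-R} x + 2 / e * indicator {0..e} x"
  using plateau'_left_bounds[of x] plateau'_right_bounds[of x] R e
  by (cases "x \<le> 0") (auto simp: indicator_def)

lemma c1_bump_plateau: "c1_bump (plateau R e) (plateau' R e) (2 * R + e) (1 + 2 / R + 2 / e)"
  unfolding c1_bump_def
proof (intro conjI allI)
  show "(plateau R e has_real_derivative plateau' R e x) (at x)" for x
    by (rule DERIV_plateau)
  show "continuous_on UNIV (plateau' R e)"
    unfolding plateau'_def[abs_def]
    by (intro continuous_intros continuous_on_compose2[OF continuous_on_ramp']
        continuous_on_compose2[OF continuous_on_ramp]) (use R e in auto)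
  fix x
  have outside: "x \<notin> {-(2 * R + e)..2 * R + e} \<Longrightarrow> x < - 2 * R \<or> e < x" using R e by auto
  have C: "1 \<le> 1 + 2 / R + 2 / e" using R e by simp
  show "0 \<le> plateau R e x" by (rule plateau_bounds)
  show "plateau R e x \<le> (1 + 2 / R + 2 / e) * indicator {-(2 * R + e)..2 * R + e} x"
    using plateau_bounds(2)[of R e x] plateau_eq_0[of x] outside C
    by (cases "x \<in> {-(2 * R + e)..2 * R + e}") auto
  have "2 / R * indicator {-2*R..-R} x \<le> 2 / R" "2 / e * indicator {0..e} x \<le> 2 / e"
    using R e by (auto simp: indicator_def)
  then have "\<bar>plateau' R e x\<bar> \<le> 1 + 2 / R + 2 / e" using abs_plateau'_le[of x] by linarith
  moreover have "plateau' R e x = 0" if "x \<notin> {-(2 * R + e)..2 * R + e}"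
    using abs_plateau'_le[of x] outside[OF that] R e by (auto simp: indicator_def)
  ultimately show "\<bar>plateau' R e x\<bar> \<le> (1 + 2 / R + 2 / e) * indicator {-(2 * R + e)..2 * R + e} x"
    by (cases "x \<in> {-(2 * R + e)..2 * R + e}") auto
qed

end

lemma test_fun_c1_bump_product:
  assumes c: "c1_bump c c' A Cc" and p: "c1_bump p p' B Cp"
  shows "test_fun (\<lambda>z. c (fst z) * p (snd z)) (\<lambda>z. c' (fst z) * p (snd z)) (\<lambda>z. c (fst z) * p' (snd z))"
  unfolding test_fun_def
proof (intro conjI allI)
  show "0 \<le> c (fst z) * p (snd z)" for z
    using c1_bumpD(4)[OF c] c1_bumpD(4)[OF p] by simp
  show "\<exists>R. \<forall>z::real\<times>real. R < norm z \<longrightarrow> c (fst z) * p (snd z) = 0"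
  proof (intro exI allI impI)
    fix z :: "real\<times>real"
    assume "\<bar>A\<bar> + \<bar>B\<bar> < norm z"
    moreover have "norm z \<le> \<bar>fst z\<bar> + \<bar>snd z\<bar>"
      using norm_Pair_le[of "fst z" "snd z"] by simp
    ultimately have "A < \<bar>fst z\<bar> \<or> B < \<bar>snd z\<bar>" by linarith
    then show "c (fst z) * p (snd z) = 0" using c1_bumpD(7)[OF c] c1_bumpD(7)[OF p] by auto
  qed
  show "continuous_on UNIV (\<lambda>z::real\<times>real. c' (fst z) * p (snd z))"
    by (intro continuous_intros continuous_on_compose2[OF c1_bumpD(2)[OF c]]
        continuous_on_compose2[OF c1_bumpD(3)[OF p]]) auto
  show "continuous_on UNIV (\<lambda>z::real\<times>real. c (fst z) * p' (snd z))"
    by (intro continuous_intros continuous_on_compose2[OF c1_bumpD(3)[OF c]]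
        continuous_on_compose2[OF c1_bumpD(2)[OF p]]) auto
  fix z :: "real \<times> real"
  have "((\<lambda>z. c (fst z)) has_derivative (\<lambda>h. fst h * c' (fst z))) (at z)"
    "((\<lambda>z. p (snd z)) has_derivative (\<lambda>h. snd h * p' (snd z))) (at z)"
    by (rule DERIV_compose_FDERIV[OF c1_bumpD(1)[OF c] has_derivative_fst[OF has_derivative_ident]]
        DERIV_compose_FDERIV[OF c1_bumpD(1)[OF p] has_derivative_snd[OF has_derivative_ident]])+
  from has_derivative_mult[OF this]
  show "((\<lambda>z. c (fst z) * p (snd z)) has_derivative
      (\<lambda>h. c' (fst z) * p (snd z) * fst h + c (fst z) * p' (snd z) * snd h)) (at z)"
    by (rule has_derivative_eq_rhs) (auto simp: fun_eq_iff algebra_simps)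
qed

lemma kruzhkov_sol_kflux_bounded:
  fixes f :: "real \<Rightarrow> real"
  assumes sol: "kruzhkov_sol f U w u0" and U: "closed U" and fc: "continuous_on U f" and k: "k \<in> U"
  obtains B where "\<And>t x. \<bar>kflux f (w t x) k\<bar> \<le> 2 * B"
proof -
  have wU: "\<And>t x. w t x \<in> U" using sol unfolding kruzhkov_sol_def by auto
  obtain M where M: "\<And>t x. \<bar>w t x\<bar> \<le> M" using sol unfolding kruzhkov_sol_def by auto
  obtain B where B: "\<And>v. v \<in> U \<Longrightarrow> \<bar>v\<bar> \<le> max M \<bar>k\<bar> \<Longrightarrow> \<bar>f v\<bar> \<le> B"
    using continuous_on_closed_bounded[OF U fc] by blast
  have "\<bar>kflux f (w t x) k\<bar> \<le> 2 * B" for t x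
    using abs_kflux_le[of f "w t x" k] B[OF wU[of t x]] B[OF k] M[of t x] by linarith
  then show thesis by (rule that)
qed

lemma kruzhkov_sol_measurable:
  fixes f :: "real \<Rightarrow> real"
  assumes sol: "kruzhkov_sol f U w u0" and U: "closed U" and fc: "continuous_on U f"
  shows "(\<lambda>z. w (fst z) (snd z)) \<in> borel_measurable borel"
    "(\<lambda>z. kflux f (w (fst z) (snd z)) k) \<in> borel_measurable borel"
proof -
  have wm: "(\<lambda>z. w (fst z) (snd z)) \<in> borel_measurable lborel" and wU: "\<And>t x. w t x \<in> U"
    using sol unfolding kruzhkov_sol_def by auto
  then show "(\<lambda>z. w (fst z) (snd z)) \<in> borel_measurable borel"
    "(\<lambda>z. kflux f (w (fst z) (snd z)) k) \<in> borel_measurable borel"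
    using borel_measurable_continuous_on_closed_comp[OF U continuous_on_kflux[OF fc] wm] by auto
qed

lemma borel_measurable_continuous_comp_fst_snd:
  fixes g :: "real \<Rightarrow> real"
  assumes "continuous_on UNIV g"
  shows "(\<lambda>z::real \<times> real. g (fst z)) \<in> borel_measurable borel"
    "(\<lambda>z::real \<times> real. g (snd z)) \<in> borel_measurable borel"
  by (rule borel_measurable_continuous_onI, rule continuous_on_compose2[OF assms];
      auto intro: continuous_intros)+

lemma borel_measurable_indicator_half_plane [measurable]:
  "(\<lambda>z::real \<times> real. indicator {z::real \<times> real. fst z > 0} z :: real) \<in> borel_measurable borel"
proof (rule borel_measurable_indicator)
  have "{z::real \<times> real. fst z > 0} = {0<..} \<times> UNIV" by auto
  then show "{z::real \<times> real. fst z > 0} \<in> sets borel"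
    by (simp add: borel_open open_Times)
qed

lemma kruzhkov_sol_product_integrable:
  fixes f :: "real \<Rightarrow> real"
  assumes sol: "kruzhkov_sol f U w u0" and U: "closed U" and fc: "continuous_on U f" and k: "k \<in> U"
    and c: "c1_bump c c' A Cc" and p: "c1_bump p p' B Cp"
  shows "integrable lborel (\<lambda>z. indicator {z. fst z > 0} z * (\<bar>w (fst z) (snd z) - k\<bar> * (c' (fst z) * p (snd z))))"
    "integrable lborel (\<lambda>z. indicator {z. fst z > 0} z * (kflux f (w (fst z) (snd z)) k * (c (fst z) * p' (snd z))))"
proof -
  obtain M where M: "\<And>t x. \<bar>w t x\<bar> \<le> M" using sol unfolding kruzhkov_sol_def by auto
  obtain Bf where Bf: "\<And>t x. \<bar>kflux f (w t x) k\<bar> \<le> 2 * Bf"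
    using kruzhkov_sol_kflux_bounded[OF sol U fc k] by blast
  note [measurable] = kruzhkov_sol_measurable[OF sol U fc]
    borel_measurable_continuous_comp_fst_snd[OF c1_bumpD(2)[OF c]]
    borel_measurable_continuous_comp_fst_snd[OF c1_bumpD(3)[OF c]]
    borel_measurable_continuous_comp_fst_snd[OF c1_bumpD(2)[OF p]]
    borel_measurable_continuous_comp_fst_snd[OF c1_bumpD(3)[OF p]]
  have bd: "\<bar>i * (x * (y * z))\<bar> \<le> X * (Cc * Cp) * (indicator {-A..A} t * indicator {-B..B} s)"
    if "\<bar>i\<bar> \<le> 1" "\<bar>x\<bar> \<le> X" "\<bar>y\<bar> \<le> Cc * indicator {-A..A} t" "\<bar>z\<bar> \<le> Cp * indicator {-B..B} s"
    for i x y z X t s :: real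
  proof -
    have "\<bar>i\<bar> * (\<bar>x\<bar> * (\<bar>y\<bar> * \<bar>z\<bar>)) \<le> 1 * (X * (Cc * indicator {-A..A} t * (Cp * indicator {-B..B} s)))"
      using that by (intro mult_mono) auto
    then show ?thesis by (simp add: abs_mult algebra_simps)
  qed
  have ind: "\<bar>indicator {z::real\<times>real. fst z > 0} z\<bar> \<le> (1::real)" for z
    by (simp add: indicator_def)
  have cb: "\<bar>c t\<bar> \<le> Cc * indicator {-A..A} t" "\<bar>p t\<bar> \<le> Cp * indicator {-B..B} t" for t
    using c1_bumpD(4,5)[OF c] c1_bumpD(4,5)[OF p] by simp_all
  show "integrable lborel (\<lambda>z. indicator {z. fst z > 0} z * (\<bar>w (fst z) (snd z) - k\<bar> * (c' (fst z) * p (snd z))))"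
  proof (rule integrable_bounded_indicator_box)
    fix z :: "real\<times>real"
    have "\<bar>\<bar>w (fst z) (snd z) - k\<bar>\<bar> \<le> M + \<bar>k\<bar>" using M[of "fst z" "snd z"] by simp
    then show "\<bar>indicator {z. fst z > 0} z * (\<bar>w (fst z) (snd z) - k\<bar> * (c' (fst z) * p (snd z)))\<bar>
      \<le> (M + \<bar>k\<bar>) * (Cc * Cp) * (indicator {-A..A} (fst z) * indicator {-B..B} (snd z))"
      by (intro bd ind c1_bumpD(6)[OF c] cb)
  qed (unfold measurable_lborel2, measurable)
  show "integrable lborel (\<lambda>z. indicator {z. fst z > 0} z * (kflux f (w (fst z) (snd z)) k * (c (fst z) * p' (snd z))))"
  proof (rule integrable_bounded_indicator_box)
    show "\<bar>indicator {z. fst z > 0} z * (kflux f (w (fst z) (snd z)) k * (c (fst z) * p' (snd z)))\<bar>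
      \<le> (2 * Bf) * (Cc * Cp) * (indicator {-A..A} (fst z) * indicator {-B..B} (snd z))" for z :: "real\<times>real"
      by (intro bd ind cb c1_bumpD(6)[OF p] Bf)
  qed (unfold measurable_lborel2, measurable)
qed

lemma kruzhkov_sol_product_test:
  fixes f :: "real \<Rightarrow> real"
  assumes sol: "kruzhkov_sol f U w u0" and U: "closed U" and fc: "continuous_on U f" and k: "k \<in> U"
    and c: "c1_bump c c' A Cc" and p: "c1_bump p p' B Cp"
  shows "0 \<le> (\<integral>z. indicator {z. fst z > 0} z * (\<bar>w (fst z) (snd z) - k\<bar> * (c' (fst z) * p (snd z))) \<partial>lborel)
      + (\<integral>z. indicator {z. fst z > 0} z * (kflux f (w (fst z) (snd z)) k * (c (fst z) * p' (snd z))) \<partial>lborel)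
      + (\<integral>x. \<bar>u0 x - k\<bar> * (c 0 * p x) \<partial>lborel)"
proof -
  have "\<forall>k\<in>U. \<forall>phi phit phix. test_fun phi phit phix \<longrightarrow>
      (\<integral>z. indicator {z. fst z > 0} z *
           (\<bar>w (fst z) (snd z) - k\<bar> * phit z + kflux f (w (fst z) (snd z)) k * phix z) \<partial>lborel)
      + (\<integral>x. \<bar>u0 x - k\<bar> * phi (0, x) \<partial>lborel) \<ge> 0"
    using sol unfolding kruzhkov_sol_def by blast
  from this[rule_format, OF k test_fun_c1_bump_product[OF c p]]
  show ?thesis
    by (simp add: distrib_left Bochner_Integration.integral_add[OF
          kruzhkov_sol_product_integrable[OF sol U fc k c p]])
qed

section \<open>Contact shocks\<close>

lemma contact_shock_kflux_le:
  fixes f :: "real \<Rightarrow> real"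
  assumes cs: "contact_shock f U a b" and U: "closed U" and fc: "continuous_on U f" and k: "k \<in> U"
  shows "kflux f b k \<le> kflux f a k"
proof -
  have sol: "kruzhkov_sol f U (\<lambda>t x. step a b x) (step a b)"
    using cs unfolding contact_shock_def by simp
  note c = c1_bump_time_cutoff and p = c1_bump_plateau[of 1 1, simplified]
  note [measurable] = c1_bump_measurable[OF p]
  note K = kruzhkov_sol_product_test[OF sol U fc k c p]
  note time = c1_bump_integral_deriv_half_lines[OF c] and space = c1_bump_integral_deriv_half_lines[OF p]
  define J where "J = (\<integral>x. \<bar>step a b x - k\<bar> * plateau 1 1 x \<partial>lborel)"
  have IJ: "integrable lborel (\<lambda>x. \<bar>step a b x - k\<bar> * plateau 1 1 x)"
  proof (rule integrable_bounded_indicator_Icc)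
    fix x
    have "\<bar>step a b x - k\<bar> * plateau 1 1 x \<le> (\<bar>a - k\<bar> + \<bar>b - k\<bar>) * (5 * indicator {-3..3} x)"
      using c1_bumpD(4,5)[OF p, of x] by (intro mult_mono) (auto simp: step_def)
    then show "\<bar>\<bar>step a b x - k\<bar> * plateau 1 1 x\<bar> \<le> ((\<bar>a - k\<bar> + \<bar>b - k\<bar>) * 5) * indicator {-3..3} x"
      using c1_bumpD(4)[OF p, of x] by (simp add: abs_mult algebra_simps)
  qed measurable
  have q_split: "kflux f (step a b x) k * plateau' 1 1 x
      = kflux f a k * (indicator {..<0} x * plateau' 1 1 x) + kflux f b k * (indicator {0<..} x * plateau' 1 1 x)" for x
    using plateau'_0[of 1 1] by (cases "x < 0"; cases "x = 0") (auto simp: step_def indicator_def)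
  have Iq: "integrable lborel (\<lambda>x. kflux f (step a b x) k * plateau' 1 1 x)"
    unfolding q_split using space(1,3) by simp
  have q_int: "(\<integral>x. kflux f (step a b x) k * plateau' 1 1 x \<partial>lborel) = kflux f a k - kflux f b k"
    unfolding q_split using space plateau_eq_1[of 1 1 0] by simp
  have "(\<integral>z. indicator {z. fst z > 0} z * (\<bar>step a b (snd z) - k\<bar> * (time_cutoff' (fst z) * plateau 1 1 (snd z))) \<partial>lborel)
      = (\<integral>z. (indicator {0<..} (fst z) * time_cutoff' (fst z)) * (\<bar>step a b (snd z) - k\<bar> * plateau 1 1 (snd z)) \<partial>lborel)"
    by (simp add: indicator_pos_fst algebra_simps)
  also have "\<dots> = - time_cutoff 0 * J"
    using lborel_pair_integral_mult(2)[OF time(1) IJ] time(2) unfolding J_def by simp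
  finally have X: "(\<integral>z. indicator {z. fst z > 0} z * (\<bar>step a b (snd z) - k\<bar> * (time_cutoff' (fst z) * plateau 1 1 (snd z))) \<partial>lborel)
      = - time_cutoff 0 * J" .
  have "(\<integral>z. indicator {z. fst z > 0} z * (kflux f (step a b (snd z)) k * (time_cutoff (fst z) * plateau' 1 1 (snd z))) \<partial>lborel)
      = (\<integral>z. (indicator {0<..} (fst z) * time_cutoff (fst z)) * (kflux f (step a b (snd z)) k * plateau' 1 1 (snd z)) \<partial>lborel)"
    by (simp add: indicator_pos_fst algebra_simps)
  also have "\<dots> = time_mass * (kflux f a k - kflux f b k)"
    using lborel_pair_integral_mult(2)[OF time_mass_pos(1) Iq] q_int unfolding time_mass_def by simp
  finally have Y: "(\<integral>z. indicator {z. fst z > 0} z * (kflux f (step a b (snd z)) k * (time_cutoff (fst z) * plateau' 1 1 (snd z))) \<partial>lborel)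
      = time_mass * (kflux f a k - kflux f b k)" .
  \<comment> \<open>the solution is stationary, so the time-derivative term cancels the initial term\<close>
  have I0: "(\<integral>x. \<bar>step a b x - k\<bar> * (time_cutoff 0 * plateau 1 1 x) \<partial>lborel) = time_cutoff 0 * J"
    unfolding J_def by (simp add: algebra_simps)
  have "0 \<le> time_mass * (kflux f a k - kflux f b k)"
    using K unfolding X Y I0 by simp
  with time_mass_pos(2) show ?thesis by (simp add: zero_le_mult_iff)
qed

lemma contact_shock_flux_eq:
  fixes f :: "real \<Rightarrow> real"
  assumes cs: "contact_shock f U a b" and U: "closed U" and fc: "continuous_on U f"
  shows "f a = f b"
proof -
  have ab: "a \<in> U" "b \<in> U" using cs unfolding contact_shock_def by auto
  have "kflux f b a \<le> kflux f a a" "kflux f b b \<le> kflux f a b"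
    using contact_shock_kflux_le[OF cs U fc ab(1)] contact_shock_kflux_le[OF cs U fc ab(2)] .
  then have "kflux f a b = 0" using kflux_commute[of f a b] by simp
  then show ?thesis by (rule kflux_eq_0_imp_eq)
qed

section \<open>The dual germ\<close>

definition dual_germ :: "(real \<Rightarrow> real) \<Rightarrow> (real \<Rightarrow> real) \<Rightarrow> real set \<Rightarrow> (real \<times> real) set \<Rightarrow> (real \<times> real) set" where
  "dual_germ fl fr U G = {(a, b) \<in> U \<times> U. fl a = fr b \<and> (\<forall>(x, y)\<in>G. kflux fr b y \<le> kflux fl a x)}"

lemma L1D_subset_dual_germ: "L1D fl fr U G \<Longrightarrow> G \<subseteq> dual_germ fl fr U G"
  unfolding L1D_def germ_def dual_germ_def by fastforce

lemma closed_germ_dual_germ: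
  fixes fl fr :: "real \<Rightarrow> real"
  assumes U: "closed U" and cl: "continuous_on U fl" and cr: "continuous_on U fr"
    and G: "germ fl fr U G"
  shows "closed_germ fl fr U (dual_germ fl fr U G)"
proof -
  let ?D = "dual_germ fl fr U G"
  have comp: "continuous_on (U \<times> U) (\<lambda>p. g (fst p))" "continuous_on (U \<times> U) (\<lambda>p. g (snd p))"
    if "continuous_on U g" for g :: "real \<Rightarrow> real"
    by (rule continuous_on_compose2[OF that]; auto intro: continuous_intros)+
  define E where "E = (U \<times> U) \<inter> (\<lambda>p. fl (fst p) - fr (snd p)) -` {0}"
  define D where "D q = (U \<times> U) \<inter> (\<lambda>p. kflux fl (fst p) (fst q) - kflux fr (snd p) (snd q)) -` {0..}"
    for q :: "real \<times> real"
  have D_eq: "?D = \<Inter>(insert E (D ` G))"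
    unfolding dual_germ_def E_def D_def by auto
  have "closedin (top_of_set (U \<times> U)) E"
    unfolding E_def
    by (rule continuous_closedin_preimage[OF continuous_on_diff[OF comp(1)[OF cl] comp(2)[OF cr]]]) simp
  moreover have "closedin (top_of_set (U \<times> U)) (D q)" for q
    unfolding D_def
    by (rule continuous_closedin_preimage[OF continuous_on_diff[OF
          comp(1)[OF continuous_on_kflux[OF cl]] comp(2)[OF continuous_on_kflux[OF cr]]]]) simp
  ultimately have "closedin (top_of_set (U \<times> U)) ?D"
    unfolding D_eq by (intro closedin_Inter) blast+
  moreover have "(a, d) \<in> ?D"
    if bc: "(b, c) \<in> ?D" and s1: "contact_shock fl U a b" and s2: "contact_shock fr U c d" for a b c d
  proof -
    have "kflux fr d y \<le> kflux fl a x" if xy: "(x, y) \<in> G" for x y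
    proof -
      have "x \<in> U" "y \<in> U" using xy G unfolding germ_def by auto
      then have "kflux fr d y \<le> kflux fr c y" "kflux fl b x \<le> kflux fl a x"
        using contact_shock_kflux_le[OF s2 U cr] contact_shock_kflux_le[OF s1 U cl] by auto
      moreover have "kflux fr c y \<le> kflux fl b x" using bc xy unfolding dual_germ_def by auto
      ultimately show ?thesis by linarith
    qed
    moreover have "fl a = fr d"
      using contact_shock_flux_eq[OF s1 U cl] contact_shock_flux_eq[OF s2 U cr] bc
      unfolding dual_germ_def by simp
    moreover have "a \<in> U" "d \<in> U" using s1 s2 unfolding contact_shock_def by auto
    ultimately show ?thesis unfolding dual_germ_def by auto
  qed
  moreover have "germ fl fr U ?D" unfolding germ_def dual_germ_def by auto
  ultimately show ?thesis unfolding closed_germ_def by blast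
qed

lemma germ_closure_subset_dual_germ:
  assumes "closed U" "continuous_on U fl" "continuous_on U fr" "L1D fl fr U G"
  shows "germ_closure fl fr U G \<subseteq> dual_germ fl fr U G"
  using closed_germ_dual_germ[OF assms(1-3)] L1D_subset_dual_germ[OF assms(4)] assms(4)
  unfolding germ_closure_def L1D_def by blast

section \<open>Waves leaving a state on one side\<close>

lemma le_of_le_plus_vanishing:
  fixes a b K A D :: real
  assumes "\<And>R e. 0 < R \<Longrightarrow> 0 < e \<Longrightarrow> a \<le> b + K / R * (A + D * e) + D * e"
  shows "a \<le> b"
proof -
  let ?r = "\<lambda>n. inverse (real (Suc n))"
  have "((\<lambda>n. b + K * ?r n * (A + D * ?r n) + D * ?r n) \<longlongrightarrow> b + K * 0 * (A + D * 0) + D * 0) sequentially"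
    by (intro tendsto_intros LIMSEQ_inverse_real_of_nat)
  moreover have "\<forall>\<^sub>F n in sequentially. a \<le> b + K * ?r n * (A + D * ?r n) + D * ?r n"
    using assms by (simp add: divide_inverse)
  ultimately show ?thesis
    by (intro tendsto_le[OF trivial_limit_sequentially _ tendsto_const]) simp_all
qed

lemma initial_plateau_integral_le:
  fixes u0 :: "real \<Rightarrow> real"
  assumes s: "\<bar>s\<bar> = 1" and R: "0 < R" and e: "0 < e" and c: "0 \<le> c"
    and u0m: "u0 \<in> borel_measurable borel"
    and u0far: "\<And>x. s * x < 0 \<Longrightarrow> u0 x = far" and u0v: "\<And>x. u0 x = far \<or> u0 x = nr"
  shows "(\<integral>x. \<bar>u0 x - far\<bar> * (c * plateau R e (s * x)) \<partial>lborel) \<le> c * \<bar>nr - far\<bar> * e"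
proof -
  note [measurable] = c1_bump_measurable[OF c1_bump_plateau[OF R e]] u0m
  have bd: "\<bar>u0 x - far\<bar> * (c * plateau R e (s * x)) \<le> (c * \<bar>nr - far\<bar>) * indicator {0..e} (s * x)" for x
  proof (cases "s * x < 0")
    case False
    have "plateau R e (s * x) \<le> indicator {0..e} (s * x)"
      using False plateau_bounds(2)[of R e "s * x"] plateau_eq_0[OF R e, of "s * x"]
      by (auto simp: indicator_def)
    moreover have "\<bar>u0 x - far\<bar> \<le> \<bar>nr - far\<bar>" using u0v[of x] by auto
    ultimately have "\<bar>u0 x - far\<bar> * plateau R e (s * x) \<le> \<bar>nr - far\<bar> * indicator {0..e} (s * x)"
      using plateau_bounds(1) by (intro mult_mono) auto
    from mult_left_mono[OF this c] show ?thesis by (simp add: algebra_simps)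
  qed (simp add: u0far indicator_def)
  have I2: "integrable lborel (\<lambda>x. (c * \<bar>nr - far\<bar>) * indicator {0..e} (s * x) :: real)"
    using lborel_integral_indicator_unit_scale(1)[OF s, of 0 e] e by simp
  have I1: "integrable lborel (\<lambda>x. \<bar>u0 x - far\<bar> * (c * plateau R e (s * x)))"
  proof (rule Bochner_Integration.integrable_bound[OF I2])
    show "AE x in lborel. norm (\<bar>u0 x - far\<bar> * (c * plateau R e (s * x)))
        \<le> norm ((c * \<bar>nr - far\<bar>) * indicator {0..e} (s * x) :: real)"
      using bd c plateau_bounds(1) by (intro AE_I2) (simp add: abs_mult)
  qed (unfold measurable_lborel2, measurable)
  have "(\<integral>x. \<bar>u0 x - far\<bar> * (c * plateau R e (s * x)) \<partial>lborel)
      \<le> (\<integral>x. (c * \<bar>nr - far\<bar>) * indicator {0..e} (s * x) \<partial>lborel)"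
    by (rule Bochner_Integration.integral_mono[OF I1 I2 bd])
  also have "\<dots> = c * \<bar>nr - far\<bar> * e"
    using lborel_integral_indicator_unit_scale(2)[OF s, of 0 e] e by simp
  finally show ?thesis .
qed

lemma one_sided_mass_bound:
  fixes f u0 :: "real \<Rightarrow> real"
  assumes sol: "kruzhkov_sol f U w u0" and U: "closed U" and fc: "continuous_on U f" and far: "far \<in> U"
    and s: "\<bar>s\<bar> = 1" and u0m: "u0 \<in> borel_measurable borel"
    and u0far: "\<And>x. s * x < 0 \<Longrightarrow> u0 x = far" and u0v: "\<And>x. u0 x = far \<or> u0 x = nr"
    and R: "0 < R" and e: "0 < e"
    and bound: "\<And>t x. \<bar>kflux f (w t x) far\<bar> \<le> 2 * B"
  shows "- (\<integral>z. indicator {z. fst z > 0} z *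
      (\<bar>w (fst z) (snd z) - far\<bar> * (time_cutoff' (fst z) * plateau R e (s * snd z))) \<partial>lborel)
    \<le> 8 * B * time_mass + time_cutoff 0 * \<bar>nr - far\<bar> * e"
proof -
  note K = kruzhkov_sol_product_test[OF sol U fc far c1_bump_time_cutoff
      c1_bump_reflect[OF s c1_bump_plateau[OF R e]]]
    and I = kruzhkov_sol_product_integrable[OF sol U fc far c1_bump_time_cutoff
      c1_bump_reflect[OF s c1_bump_plateau[OF R e]]]
  define h where "h x = 2 * B * (2 / R * indicator {-2*R..-R} (s * x) + 2 / e * indicator {0..e} (s * x))" for x
  have Ih: "integrable lborel h" and int_h: "(\<integral>x. h x \<partial>lborel) = 8 * B"
    unfolding h_def
    using lborel_integral_indicator_unit_scale[OF s, of "-2*R" "-R"]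
      lborel_integral_indicator_unit_scale[OF s, of 0 e] R e by auto
  have "0 \<le> 2 * B" using abs_ge_zero bound by (rule order_trans)
  then have B0: "0 \<le> B" by simp
  have "indicator {z. fst z > 0} z * (kflux f (w (fst z) (snd z)) far * (time_cutoff (fst z) * (s * plateau' R e (s * snd z))))
      \<le> (indicator {0<..} (fst z) * time_cutoff (fst z)) * h (snd z)" for z :: "real \<times> real"
  proof -
    have "\<bar>kflux f (w (fst z) (snd z)) far * (s * plateau' R e (s * snd z))\<bar>
        \<le> 2 * B * (2 / R * indicator {-2*R..-R} (s * snd z) + 2 / e * indicator {0..e} (s * snd z))"
      unfolding abs_mult s mult_1_left
      using B0 by (intro mult_mono bound abs_plateau'_le[OF R e]) auto
    then have "kflux f (w (fst z) (snd z)) far * (s * plateau' R e (s * snd z)) \<le> h (snd z)"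
      unfolding h_def by linarith
    from mult_left_mono[OF this c1_bumpD(4)[OF c1_bump_time_cutoff]] show ?thesis
      by (auto simp: indicator_def algebra_simps)
  qed
  then have "(\<integral>z. indicator {z. fst z > 0} z * (kflux f (w (fst z) (snd z)) far * (time_cutoff (fst z) * (s * plateau' R e (s * snd z)))) \<partial>lborel)
      \<le> (\<integral>z. (indicator {0<..} (fst z) * time_cutoff (fst z)) * h (snd z) \<partial>lborel)"
    by (intro Bochner_Integration.integral_mono I(2) lborel_pair_integral_mult(1)[OF time_mass_pos(1) Ih])
  also have "\<dots> = 8 * B * time_mass"
    using lborel_pair_integral_mult(2)[OF time_mass_pos(1) Ih] int_h unfolding time_mass_def by simp
  finally show ?thesis
    using K initial_plateau_integral_le[OF s R e c1_bumpD(4)[OF c1_bump_time_cutoff, of 0] u0m u0far u0v]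
    by linarith
qed

text \<open>On the left edge \<open>[-2R, -R]\<close> the flux is at most \<open>\<delta> + C |v - far|\<close>; since
  \<open>time_cutoff \<le> 2 (- time_cutoff')\<close> and the plateau of width \<open>2R\<close> is 1 there, the second
  part is dominated by the mass term that \<open>one_sided_mass_bound\<close> controls at scale \<open>2R\<close>.\<close>

lemma one_sided_flux_pointwise_le:
  fixes f :: "real \<Rightarrow> real"
  assumes s: "\<bar>s\<bar> = 1" and R: "0 < R" and e: "0 < e" and t: "0 \<le> t" and C: "0 \<le> C" and \<delta>: "0 \<le> \<delta>"
    and v: "0 < y \<Longrightarrow> v = nr" and q: "\<bar>kflux f v far\<bar> \<le> \<delta> + C * \<bar>v - far\<bar>"
  shows "kflux f v far * (time_cutoff t * (s * plateau' R e y))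
    \<le> time_cutoff t * (\<delta> * (2 / R * indicator {-2*R..-R} y))
      + time_cutoff t * (s * kflux f nr far * (indicator {0<..} y * plateau' R e y))
      - 4 * C / R * (\<bar>v - far\<bar> * (time_cutoff' t * plateau (2 * R) e y))"
proof -
  have c: "0 \<le> time_cutoff t" "time_cutoff t \<le> 2 * (- time_cutoff' t)" "time_cutoff' t \<le> 0"
    using c1_bumpD(4)[OF c1_bump_time_cutoff] time_cutoff_le_deriv[OF t] by auto
  have "\<bar>v - far\<bar> * (time_cutoff' t * plateau (2 * R) e y) \<le> 0"
    using c(3) plateau_bounds(1)[of "2 * R" e y] by (intro mult_nonneg_nonpos mult_nonpos_nonneg) auto
  moreover have "0 \<le> 4 * C / R" using C R by simp
  ultimately have mass: "0 \<le> - 4 * C / R * (\<bar>v - far\<bar> * (time_cutoff' t * plateau (2 * R) e y))"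
    using mult_nonneg_nonpos by fastforce
  have left: "0 \<le> time_cutoff t * (\<delta> * (2 / R * indicator {-2*R..-R} y))"
    using c(1) \<delta> R by simp
  consider "y < 0" | "y = 0" | "0 < y" by linarith
  then show ?thesis
  proof cases
    case 1
    define I :: real where "I = indicator {-2*R..-R} y"
    have P: "0 \<le> plateau' R e y" "plateau' R e y \<le> 2 / R * I"
      using plateau'_left_bounds[OF R e, of y] 1 unfolding I_def by auto
    have "time_cutoff t * I \<le> 2 * (- time_cutoff' t) * plateau (2 * R) e y"
    proof (cases "y \<in> {-2*R..-R}")
      case True
      then have "plateau (2 * R) e y = 1" using plateau_eq_1[of "2 * R" e y] R e 1 by simp
      then show ?thesis using True c(2) by (simp add: I_def)
    qed (use c(3) plateau_bounds(1)[of "2 * R" e y] in \<open>simp add: I_def mult_nonpos_nonneg\<close>)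
    then have "C * \<bar>v - far\<bar> * (2 / R) * (time_cutoff t * I)
        \<le> C * \<bar>v - far\<bar> * (2 / R) * (2 * (- time_cutoff' t) * plateau (2 * R) e y)"
      using C R by (intro mult_left_mono) auto
    moreover have "kflux f v far * (time_cutoff t * (s * plateau' R e y))
        \<le> (\<delta> + C * \<bar>v - far\<bar>) * (time_cutoff t * (2 / R * I))"
    proof -
      have "kflux f v far * (time_cutoff t * (s * plateau' R e y))
          \<le> \<bar>kflux f v far\<bar> * (time_cutoff t * plateau' R e y)"
        using c(1) P(1) s by (auto simp: abs_mult intro: order_trans[OF abs_ge_self])
      also have "\<dots> \<le> (\<delta> + C * \<bar>v - far\<bar>) * (time_cutoff t * (2 / R * I))"
        using q c(1) P by (intro mult_mono) (auto simp: mult_left_mono)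
      finally show ?thesis .
    qed
    moreover have "(\<delta> + C * \<bar>v - far\<bar>) * (time_cutoff t * (2 / R * I))
        = time_cutoff t * (\<delta> * (2 / R * I)) + C * \<bar>v - far\<bar> * (2 / R) * (time_cutoff t * I)"
      "C * \<bar>v - far\<bar> * (2 / R) * (2 * (- time_cutoff' t) * plateau (2 * R) e y)
        = - 4 * C / R * (\<bar>v - far\<bar> * (time_cutoff' t * plateau (2 * R) e y))"
      by (simp_all add: algebra_simps add_divide_distrib)
    moreover have "time_cutoff t * (s * kflux f nr far * (indicator {0<..} y * plateau' R e y)) = 0"
      using 1 by simp
    ultimately show ?thesis unfolding I_def by linarith
  next
    case 2
    then show ?thesis using plateau'_0[OF R e] left mass by simp
  next
    case 3
    then show ?thesis using v left mass by (simp add: algebra_simps)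
  qed
qed

lemma one_sided_flux_term_le:
  fixes f u0 :: "real \<Rightarrow> real"
  assumes sol: "kruzhkov_sol f U w u0" and U: "closed U" and fc: "continuous_on U f" and far: "far \<in> U"
    and s: "\<bar>s\<bar> = 1" and R: "0 < R" and e: "0 < e"
    and ae: "AE z in lborel. fst z > 0 \<and> s * snd z > 0 \<longrightarrow> w (fst z) (snd z) = nr"
    and modulus: "\<And>t x. \<bar>kflux f (w t x) far\<bar> \<le> \<delta> + C * \<bar>w t x - far\<bar>"
    and C: "0 \<le> C" and \<delta>: "0 \<le> \<delta>"
  shows "(\<integral>z. indicator {z. fst z > 0} z *
      (kflux f (w (fst z) (snd z)) far * (time_cutoff (fst z) * (s * plateau' R e (s * snd z)))) \<partial>lborel)
    \<le> 2 * \<delta> * time_mass - s * kflux f nr far * time_mass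
      - 4 * C / R * (\<integral>z. indicator {z. fst z > 0} z *
          (\<bar>w (fst z) (snd z) - far\<bar> * (time_cutoff' (fst z) * plateau (2 * R) e (s * snd z))) \<partial>lborel)"
proof -
  have R2: "0 < 2 * R" using R by simp
  note time = time_mass_pos(1)
  define h1 where "h1 x = \<delta> * (2 / R * indicator {-2*R..-R} (s * x))" for x
  define h3 where "h3 x = s * kflux f nr far * (indicator {0<..} (s * x) * plateau' R e (s * x))" for x
  have Ih1: "integrable lborel h1" and int_h1: "(\<integral>x. h1 x \<partial>lborel) = 2 * \<delta>"
    unfolding h1_def using lborel_integral_indicator_unit_scale[OF s, of "-2*R" "-R"] R by auto
  note right = c1_bump_integral_deriv_half_lines(1,2)[OF c1_bump_plateau[OF R e]]
  have Ih3: "integrable lborel h3" and int_h3: "(\<integral>x. h3 x \<partial>lborel) = - (s * kflux f nr far)"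
    unfolding h3_def
    using lborel_integral_unit_scale[OF s, of "\<lambda>y. indicator {0<..} y * plateau' R e y"] right
      plateau_eq_1[OF R e, of 0] R by auto
  note I2 = kruzhkov_sol_product_integrable(1)[OF sol U fc far c1_bump_time_cutoff
      c1_bump_reflect[OF s c1_bump_plateau[OF R2 e]]]
  define X2 where "X2 = (\<integral>z. indicator {z. fst z > 0} z *
      (\<bar>w (fst z) (snd z) - far\<bar> * (time_cutoff' (fst z) * plateau (2 * R) e (s * snd z))) \<partial>lborel)"
  define G where "G z = (indicator {0<..} (fst z) * time_cutoff (fst z)) * h1 (snd z)
      + (indicator {0<..} (fst z) * time_cutoff (fst z)) * h3 (snd z)
      - 4 * C / R * (indicator {z. fst z > 0} z *
          (\<bar>w (fst z) (snd z) - far\<bar> * (time_cutoff' (fst z) * plateau (2 * R) e (s * snd z))))"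
    for z :: "real \<times> real"
  have "AE z in lborel. indicator {z. fst z > 0} z *
      (kflux f (w (fst z) (snd z)) far * (time_cutoff (fst z) * (s * plateau' R e (s * snd z)))) \<le> G z"
    using ae
  proof eventually_elim
    fix z :: "real \<times> real"
    assume nr: "fst z > 0 \<and> s * snd z > 0 \<longrightarrow> w (fst z) (snd z) = nr"
    show "indicator {z. fst z > 0} z *
      (kflux f (w (fst z) (snd z)) far * (time_cutoff (fst z) * (s * plateau' R e (s * snd z)))) \<le> G z"
    proof (cases "fst z > 0")
      case True
      have "kflux f (w (fst z) (snd z)) far * (time_cutoff (fst z) * (s * plateau' R e (s * snd z)))
        \<le> time_cutoff (fst z) * (\<delta> * (2 / R * indicator {-2*R..-R} (s * snd z)))
          + time_cutoff (fst z) * (s * kflux f nr far * (indicator {0<..} (s * snd z) * plateau' R e (s * snd z)))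
          - 4 * C / R * (\<bar>w (fst z) (snd z) - far\<bar> * (time_cutoff' (fst z) * plateau (2 * R) e (s * snd z)))"
        using True nr by (intro one_sided_flux_pointwise_le[OF s R e _ C \<delta> _ modulus]) auto
      then show ?thesis using True by (simp add: G_def h1_def h3_def)
    qed (simp add: G_def indicator_def)
  qed
  moreover have "integrable lborel G"
    unfolding G_def using lborel_pair_integral_mult(1)[OF time] Ih1 Ih3 I2 by simp
  ultimately have "(\<integral>z. indicator {z. fst z > 0} z *
      (kflux f (w (fst z) (snd z)) far * (time_cutoff (fst z) * (s * plateau' R e (s * snd z)))) \<partial>lborel)
      \<le> (\<integral>z. G z \<partial>lborel)"
    by (intro integral_mono_AE kruzhkov_sol_product_integrable(2)[OF sol U fc far c1_bump_time_cutoff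
        c1_bump_reflect[OF s c1_bump_plateau[OF R e]]])
  also have "(\<integral>z. G z \<partial>lborel) = time_mass * (2 * \<delta>) + time_mass * (- (s * kflux f nr far))
      - 4 * C / R * X2"
    unfolding G_def X2_def time_mass_def
    using lborel_pair_integral_mult[OF time Ih1] lborel_pair_integral_mult[OF time Ih3] I2 int_h1 int_h3
    by simp
  finally show ?thesis unfolding X2_def by (simp add: algebra_simps)
qed

lemma one_sided_flux_estimate:
  fixes f u0 :: "real \<Rightarrow> real"
  assumes sol: "kruzhkov_sol f U w u0" and U: "closed U" and fc: "continuous_on U f" and far: "far \<in> U"
    and s: "\<bar>s\<bar> = 1" and u0m: "u0 \<in> borel_measurable borel"
    and u0far: "\<And>x. s * x < 0 \<Longrightarrow> u0 x = far" and u0v: "\<And>x. u0 x = far \<or> u0 x = nr"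
    and ae: "AE z in lborel. fst z > 0 \<and> s * snd z > 0 \<longrightarrow> w (fst z) (snd z) = nr"
    and R: "0 < R" and e: "0 < e"
    and bound: "\<And>t x. \<bar>kflux f (w t x) far\<bar> \<le> 2 * B"
    and modulus: "\<And>t x. \<bar>kflux f (w t x) far\<bar> \<le> \<delta> + C * \<bar>w t x - far\<bar>"
    and C: "0 \<le> C" and \<delta>: "0 \<le> \<delta>"
  shows "s * kflux f nr far * time_mass
    \<le> 2 * \<delta> * time_mass + 4 * C / R * (8 * B * time_mass + time_cutoff 0 * \<bar>nr - far\<bar> * e)
      + time_cutoff 0 * \<bar>nr - far\<bar> * e"
proof -
  have R2: "0 < 2 * R" using R by simp
  define X2 where "X2 = (\<integral>z. indicator {z. fst z > 0} z *
      (\<bar>w (fst z) (snd z) - far\<bar> * (time_cutoff' (fst z) * plateau (2 * R) e (s * snd z))) \<partial>lborel)"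
  have "(\<integral>z. indicator {z. fst z > 0} z *
      (\<bar>w (fst z) (snd z) - far\<bar> * (time_cutoff' (fst z) * plateau R e (s * snd z))) \<partial>lborel)
      \<le> (\<integral>z. 0 \<partial>(lborel :: (real \<times> real) measure))"
  proof (rule Bochner_Integration.integral_mono[OF kruzhkov_sol_product_integrable(1)[OF sol U fc far
        c1_bump_time_cutoff c1_bump_reflect[OF s c1_bump_plateau[OF R e]]] integrable_zero])
    fix z :: "real \<times> real"
    have "time_cutoff' (fst z) * plateau R e (s * snd z) \<le> 0" if "0 < fst z"
      using time_cutoff_le_deriv(1)[of "fst z"] plateau_bounds(1)[of R e "s * snd z"] that
      by (simp add: mult_nonpos_nonneg)
    then show "indicator {z. fst z > 0} z *
        (\<bar>w (fst z) (snd z) - far\<bar> * (time_cutoff' (fst z) * plateau R e (s * snd z))) \<le> 0"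
      by (simp add: indicator_def mult_nonneg_nonpos)
  qed
  moreover note kruzhkov_sol_product_test[OF sol U fc far c1_bump_time_cutoff
      c1_bump_reflect[OF s c1_bump_plateau[OF R e]]]
    one_sided_flux_term_le[OF sol U fc far s R e ae modulus C \<delta>, folded X2_def]
    initial_plateau_integral_le[OF s R e c1_bumpD(4)[OF c1_bump_time_cutoff, of 0] u0m u0far u0v]
  ultimately have "0 \<le> 2 * \<delta> * time_mass - s * kflux f nr far * time_mass - 4 * C / R * X2
      + time_cutoff 0 * \<bar>nr - far\<bar> * e"
    by simp
  moreover have "- X2 \<le> 8 * B * time_mass + time_cutoff 0 * \<bar>nr - far\<bar> * e"
    unfolding X2_def by (rule one_sided_mass_bound[OF sol U fc far s u0m u0far u0v R2 e bound])
  from mult_left_mono[OF this, of "4 * C / R"] have "- (4 * C / R * X2)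
      \<le> 4 * C / R * (8 * B * time_mass + time_cutoff 0 * \<bar>nr - far\<bar> * e)"
    using C R by simp
  ultimately show ?thesis by (simp add: algebra_simps)
qed

lemma one_sided_wave_kflux_sign:
  fixes f u0 :: "real \<Rightarrow> real"
  assumes sol: "kruzhkov_sol f U w u0" and U: "closed U" and fc: "continuous_on U f" and far: "far \<in> U"
    and s: "\<bar>s\<bar> = 1" and u0m: "u0 \<in> borel_measurable borel"
    and u0far: "\<And>x. s * x < 0 \<Longrightarrow> u0 x = far" and u0v: "\<And>x. u0 x = far \<or> u0 x = nr"
    and ae: "AE z in lborel. fst z > 0 \<and> s * snd z > 0 \<longrightarrow> w (fst z) (snd z) = nr"
  shows "s * kflux f far nr \<le> 0"
proof -
  have wU: "\<And>t x. w t x \<in> U" using sol unfolding kruzhkov_sol_def by auto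
  obtain M where M: "\<And>t x. \<bar>w t x\<bar> \<le> M" using sol unfolding kruzhkov_sol_def by auto
  obtain B where bound: "\<And>t x. \<bar>kflux f (w t x) far\<bar> \<le> 2 * B"
    using kruzhkov_sol_kflux_bounded[OF sol U fc far] by blast
  have "s * kflux f nr far \<le> 0 + \<epsilon>" if \<epsilon>: "0 < \<epsilon>" for \<epsilon>
  proof -
    obtain C where C: "0 \<le> C"
      and modulus: "\<And>v. v \<in> U \<Longrightarrow> \<bar>v\<bar> \<le> M \<Longrightarrow> \<bar>kflux f v far\<bar> \<le> \<epsilon> / 2 + C * \<bar>v - far\<bar>"
      using kflux_modulus[OF U fc far, of "\<epsilon> / 2"] \<epsilon> by auto
    have "s * kflux f nr far * time_mass \<le> 2 * (\<epsilon> / 2) * time_mass"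
      by (rule le_of_le_plus_vanishing, rule one_sided_flux_estimate[OF sol U fc far s u0m u0far u0v ae
            _ _ bound modulus[OF wU M] C]) (use \<epsilon> in auto)
    with time_mass_pos(2) show ?thesis by simp
  qed
  then show ?thesis
    using field_le_epsilon kflux_commute[of f far nr] by metis
qed

lemma connects_left_kflux_nonpos:
  fixes fl :: "real \<Rightarrow> real"
  assumes "connects_left fl U um ul" and "closed U" and "continuous_on U fl" and "um \<in> U"
  shows "kflux fl um ul \<le> 0"
proof -
  obtain w where sol: "kruzhkov_sol fl U w (step um ul)"
    and ae: "AE z in lborel. fst z > 0 \<and> snd z > 0 \<longrightarrow> w (fst z) (snd z) = ul"
    using assms(1) unfolding connects_left_def by blast
  have "1 * kflux fl um ul \<le> 0"
    by (rule one_sided_wave_kflux_sign[OF sol assms(2-4)]) (use ae in \<open>auto simp: step_def\<close>)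
  then show ?thesis by simp
qed

lemma connects_right_kflux_nonneg:
  fixes fr :: "real \<Rightarrow> real"
  assumes "connects_right fr U ur up" and "closed U" and "continuous_on U fr" and "up \<in> U"
  shows "0 \<le> kflux fr up ur"
proof -
  obtain w where sol: "kruzhkov_sol fr U w (step ur up)"
    and ae: "AE z in lborel. fst z > 0 \<and> snd z < 0 \<longrightarrow> w (fst z) (snd z) = ur"
    using assms(1) unfolding connects_right_def by blast
  have "- 1 * kflux fr up ur \<le> 0"
    by (rule one_sided_wave_kflux_sign[OF sol assms(2-4)]) (use ae in \<open>auto simp: step_def\<close>)
  then show ?thesis by simp
qed

theorem proposition4p6:
  fixes U :: "real set" and fl fr :: "real \<Rightarrow> real" and G :: "(real \<times> real) set"
    and ul ur um up :: real
  assumes "closed U" and "is_interval U" and "U \<noteq> {}"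
    and "continuous_on U fl" and "continuous_on U fr"
    and "L1D fl fr U G"
    and "(ul, ur) \<in> G"
    and "um \<in> U" and "up \<in> U"
    and "connects_left fl U um ul"
    and "connects_right fr U ur up"
    and "(um, up) \<in> germ_closure fl fr U G"
  shows "fl um = fr up \<and> fr up = fl ul \<and> fl ul = fr ur"
proof -
  have "(um, up) \<in> dual_germ fl fr U G"
    using germ_closure_subset_dual_germ[OF assms(1,4-6)] assms(12) by blast
  then have flux: "fl um = fr up" and dissipation: "kflux fr up ur \<le> kflux fl um ul"
    using assms(7) unfolding dual_germ_def by auto
  have "kflux fl um ul \<le> 0" by (rule connects_left_kflux_nonpos[OF assms(10,1,4,8)])
  moreover have "0 \<le> kflux fr up ur" by (rule connects_right_kflux_nonneg[OF assms(11,1,5,9)])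
  ultimately have "kflux fl um ul = 0" using dissipation by linarith
  then have "fl um = fl ul" by (rule kflux_eq_0_imp_eq)
  moreover have "fl ul = fr ur"
    using assms(6,7) unfolding L1D_def germ_def by (meson case_prodD conjunct1 conjunct2 bspec)
  ultimately show ?thesis using flux by simp
qed

end
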